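(* Let $\widetilde{\mathsf T}(z)$ be the operator defined in the context, written in the normal form $\widetilde{\mathsf T}(z)=\sum_\alpha f_\alpha(z)\mathsf D^{(\alpha)}$. Then for every $k\in\{1,\dots,d\}$ and every smooth function $F$ of $(k_1,\dots,k_{n-1})$, setting $G(\bm y,\rho)=F(\bm k(\bm y,\rho))$, one has $$\sum_\alpha f_\alpha(y_k)\,(\mathsf D^{(\alpha)}F)(\bm k(\bm y,\rho))=-\frac{\partial^2}{\partial y_k^2}G(\bm y,\rho),$$ at all points with $\rho\ne0$, $y_k\notin\{z_1,\dots,z_{n-1}\}$; i.e. $\widetilde{\mathsf T}(y_k)=-\partial_{y_k}^2$.
   Context: $n\ge4$, $d=n-3$, $z_1,\dots,z_{n-1}\in\mathbb C$ distinct, $j_1,\dots,j_{n-1}\in\mathbb C$, $\delta_r=j_r(j_r+1)$. Change of variables: $k_r(\bm y,\rho)=\rho\,\kappa_r(\bm y)$, $\kappa_r(\bm y)=\frac{\prod_{k=1}^{d}(z_r-y_k)}{\prod_{s\ne r}(z_r-z_s)}$, $r=1,\dots,n-1$, with $\bm y=(y_1,\dots,y_d)$, $\rho\in\mathbb C^*$. Define operators in the variables $k_1,\dots,k_{n-1}$ depending on $z\in\mathbb C\setminus\{z_r\}$: $\mathsf c(z)=\sum_{r=1}^{n-1}\frac{k_r}{z-z_r}$, $\mathsf a(z)=-\sum_{r=1}^{n-1}\frac{k_r}{z-z_r}\partial_{k_r}$, $\mathsf b(z)=\sum_{r=1}^{n-1}\frac{1}{z-z_r}\big(\frac{\delta_r}{k_r}-k_r\partial_{k_r}^2\big)$,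 $\mathsf a'(z)=\sum_{r}\frac{k_r}{(z-z_r)^2}\partial_{k_r}$, and $\widetilde{\mathsf T}(z)=-\mathsf a(z)^2+\mathsf a'(z)-\mathsf c(z)\mathsf b(z)$. Expanding, $\widetilde{\mathsf T}(z)=\sum_\alpha f_\alpha(z)\mathsf D^{(\alpha)}$ with rational functions $f_\alpha$ of $z$ placed to the left of $z$-independent differential operators $\mathsf D^{(\alpha)}$ in $\bm k$ (e.g. $\mathsf a(z)^2=\sum_{r,s}\frac{1}{(z-z_r)(z-z_s)}k_r\partial_{k_r}k_s\partial_{k_s}$); "$\widetilde{\mathsf T}(y_k)$" means substituting $z=y_k$ in the $f_\alpha$ and pulling back via the change of variables. (In the paper, $\widetilde{\mathsf T}(z)$ represents the conjugate of the operator $\mathsf T(z)=\sum_{r=1}^{n-1}\big(\frac{\delta_r}{(z-z_r)^2}+\frac{\mathsf H_r}{z-z_r}\big)$, built from the Gaudin Hamiltonians $\mathsf H_r$, by the twisted Fourier transform.) *)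

theory Defs
  imports "HOL-Analysis.Analysis"
begin

text \<open>Indices r = 1..n-1 are the elements of a finite type 'm (CARD('m) = n-1);
  indices k = 1..d of the finite type 'd (CARD('d) = d = n-3).\<close>

definition pd :: "'m::finite \<Rightarrow> (complex^'m \<Rightarrow> complex) \<Rightarrow> complex^'m \<Rightarrow> complex" where
  "pd r F x = deriv (\<lambda>t. F (\<chi> i. if i = r then t else x $ i)) (x $ r)"

definition cdiff_on :: "(complex^'m::finite) set \<Rightarrow> (complex^'m \<Rightarrow> complex) \<Rightarrow> bool" where
  "cdiff_on U F \<longleftrightarrow> (\<forall>x\<in>U. \<exists>P. (F has_derivative (\<lambda>h. \<Sum>r\<in>UNIV. P r * h $ r)) (at x))"

definition holo2 :: "(complex^'m::finite) set \<Rightarrow> (complex^'m \<Rightarrow> complex) \<Rightarrow> bool" where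
  "holo2 U F \<longleftrightarrow> cdiff_on U F \<and> (\<forall>r. cdiff_on U (pd r F))"

definition kappa :: "complex^'m::finite \<Rightarrow> 'm \<Rightarrow> complex^'d::finite \<Rightarrow> complex" where
  "kappa z r y = (\<Prod>k\<in>UNIV. z $ r - y $ k) / (\<Prod>s\<in>UNIV - {r}. z $ r - z $ s)"

definition kmap :: "complex^'m::finite \<Rightarrow> complex^'d::finite \<Rightarrow> complex \<Rightarrow> complex^'m" where
  "kmap z y \<rho> = (\<chi> r. \<rho> * kappa z r y)"

text \<open>Normal form of Ttilde(w) = -a(w)^2 + a'(w) - c(w) b(w), applied to F at the point x:
  coefficients (rational in w) on the left of w-independent differential operators.\<close>
definition Ttilde :: "complex^'m::finite \<Rightarrow> ('m \<Rightarrow> complex) \<Rightarrow> (complex^'m \<Rightarrow> complex)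
    \<Rightarrow> complex \<Rightarrow> complex^'m \<Rightarrow> complex" where
  "Ttilde z \<delta> F w x =
     - (\<Sum>r\<in>UNIV. \<Sum>s\<in>UNIV. (1 / ((w - z $ r) * (w - z $ s))) *
           (x $ r * pd r (\<lambda>x'. x' $ s * pd s F x') x))
     + (\<Sum>r\<in>UNIV. (1 / (w - z $ r)^2) * (x $ r * pd r F x))
     - (\<Sum>r\<in>UNIV. \<Sum>s\<in>UNIV. (1 / ((w - z $ r) * (w - z $ s))) *
           (x $ r * (\<delta> s / x $ s * F x - x $ s * pd s (pd s F) x)))"

end

theory Submission
  imports Defs "HOL-Computational_Algebra.Polynomial"
begin

text \<open>When only y_k varies, k(y, \<rho>) moves on an affine line a + y_k b with direction
  b_r = -\<rho> prod_{i \<noteq> k} (z_r - y_i) / prod_{s \<noteq> r} (z_r - z_s), so the second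
  y_k-derivative of G is the Hessian of F evaluated on (b, b). On the operator side,
  k_r = b_r (y_k - z_r), hence a(y_k) = - sum_r b_r \<partial>_r at that point: the a'-term cancels the
  first-order part of a(y_k)^2, and c(y_k) = sum_r b_r vanishes, being -\<rho> times the top
  coefficient of the Lagrange interpolant, at the n - 1 nodes z_r, of a polynomial of degree
  n - 4.\<close>

lemma sum_poly_div_prod_diff_eq_0:
  fixes z :: "'i \<Rightarrow> 'a::field" and p :: "'a poly"
  assumes "finite A" and "inj_on z A" and "degree p + 2 \<le> card A"
  shows "(\<Sum>r\<in>A. poly p (z r) / (\<Prod>s\<in>A - {r}. z r - z s)) = 0"
proof -
  define D where "D r = (\<Prod>s\<in>A - {r}. z r - z s)" for r
  define Q where "Q r = (\<Prod>s\<in>A - {r}. [:- z s, 1:])" for r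
  define L where "L = (\<Sum>r\<in>A. smult (poly p (z r) / D r) (Q r))"
  have D_nonzero: "D r \<noteq> 0" if "r \<in> A" for r
    using assms(1,2) that by (auto simp: D_def inj_on_def)
  have degree_Q: "degree (Q r) = card A - 1" if "r \<in> A" for r
    using assms(1) that by (simp add: Q_def degree_prod_eq_sum_degree card_Diff_singleton)
  have coeff_Q: "coeff (Q r) (card A - 1) = 1" if "r \<in> A" for r
  proof -
    have "lead_coeff (Q r) = 1" by (simp add: Q_def lead_coeff_prod)
    then show ?thesis using degree_Q[OF that] by simp
  qed
  have poly_Q: "poly (Q r) (z q) = (if q = r then D r else 0)" if "q \<in> A" for r q
    using assms(1) that by (auto simp: Q_def D_def poly_prod intro!: prod_zero)
  have "poly L (z q) = poly p (z q)" if "q \<in> A" for q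
    using that D_nonzero by (simp add: L_def poly_sum poly_Q if_distrib assms(1) cong: if_cong)
  moreover have "degree L \<le> card A - 1"
    unfolding L_def
    by (intro degree_sum_le) (auto intro: order.trans[OF degree_smult_le] simp: degree_Q assms(1))
  ultimately have "L = p"
    using assms by (intro poly_eqI_degree[where A = "z ` A"]) (auto simp: card_image)
  moreover have "coeff L (card A - 1) = (\<Sum>r\<in>A. poly p (z r) / D r)"
    using coeff_Q by (auto simp: L_def coeff_sum intro!: sum.cong)
  moreover have "coeff p (card A - 1) = 0"
    using assms(3) by (intro coeff_eq_0) auto
  ultimately show ?thesis by (simp add: D_def)
qed

lemma has_derivative_line:
  fixes a b :: "complex^'m::finite"
  shows "((\<lambda>t. a + t *s b) has_derivative (\<lambda>h. h *s b)) (at t)"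
proof -
  have "bounded_linear (\<lambda>h::complex. h *s b)"
    by (rule linear_conv_bounded_linear[THEN iffD1])
      (auto intro!: linearI simp: vec_eq_iff algebra_simps)
  from has_derivative_add_const[OF bounded_linear_imp_has_derivative[OF this], of a]
  show ?thesis by (simp add: add.commute)
qed

lemma has_field_derivative_along_line:
  fixes G :: "complex^'m::finite \<Rightarrow> complex"
  assumes "(G has_derivative (\<lambda>h. \<Sum>r\<in>UNIV. P r * h $ r)) (at (a + t *s b))"
  shows "((\<lambda>t. G (a + t *s b)) has_field_derivative (\<Sum>r\<in>UNIV. P r * b $ r)) (at t)"
proof -
  have "((\<lambda>t. G (a + t *s b)) has_derivative (\<lambda>h. \<Sum>r\<in>UNIV. P r * (h *s b) $ r)) (at t)"
    using has_derivative_compose[OF has_derivative_line assms] by simp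
  moreover have "(\<lambda>h. \<Sum>r\<in>UNIV. P r * (h *s b) $ r) = (*) (\<Sum>r\<in>UNIV. P r * b $ r)"
    by (rule ext) (simp add: sum_distrib_left mult_ac)
  ultimately show ?thesis
    by (simp add: has_field_derivative_def)
qed

lemma pd_eqI:
  fixes G :: "complex^'m::finite \<Rightarrow> complex"
  assumes "(G has_derivative (\<lambda>h. \<Sum>s\<in>UNIV. P s * h $ s)) (at x)"
  shows "pd r G x = P r"
proof -
  define a where "a = x - x $ r *s axis r 1"
  have line: "(\<chi> i. if i = r then t else x $ i) = a + t *s axis r 1" for t
    by (auto simp: vec_eq_iff a_def axis_def)
  have "a + x $ r *s axis r 1 = x"
    by (simp add: a_def)
  with assms have "((\<lambda>t. G (a + t *s axis r 1)) has_field_derivative P r) (at (x $ r))"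
    using has_field_derivative_along_line[of G P a "x $ r" "axis r 1"]
    by (simp add: axis_def if_distrib cong: if_cong)
  then show ?thesis
    by (simp add: pd_def line DERIV_imp_deriv)
qed

lemma has_derivative_pd:
  assumes "cdiff_on U G" and "x \<in> U"
  shows "(G has_derivative (\<lambda>h. \<Sum>r\<in>UNIV. pd r G x * h $ r)) (at x)"
proof -
  obtain P where P: "(G has_derivative (\<lambda>h. \<Sum>r\<in>UNIV. P r * h $ r)) (at x)"
    using assms unfolding cdiff_on_def by blast
  then show ?thesis
    by (simp add: pd_eqI[OF P])
qed

lemma pd_coord_mult:
  assumes "cdiff_on U G" and "x \<in> U"
  shows "pd r (\<lambda>x. x $ s * G x) x = (if r = s then G x else 0) + x $ s * pd r G x"
proof (rule pd_eqI)
  have "((\<lambda>x. x $ s * G x) has_derivative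
      (\<lambda>h. x $ s * (\<Sum>r\<in>UNIV. pd r G x * h $ r) + h $ s * G x)) (at x)"
    by (rule has_derivative_mult[OF bounded_linear_imp_has_derivative has_derivative_pd[OF assms]])
      (rule bounded_linear_vec_nth)
  moreover have "x $ s * (\<Sum>r\<in>UNIV. pd r G x * h $ r) + h $ s * G x
      = (\<Sum>r\<in>UNIV. ((if r = s then G x else 0) + x $ s * pd r G x) * h $ r)" for h
    unfolding distrib_right sum.distrib
    by (simp add: sum_distrib_left mult.assoc if_distrib[where f="\<lambda>u. u * _"] cong: if_cong)
  ultimately show "((\<lambda>x. x $ s * G x) has_derivative
      (\<lambda>h. \<Sum>r\<in>UNIV. ((if r = s then G x else 0) + x $ s * pd r G x) * h $ r)) (at x)"
    by simp
qed

lemma deriv2_along_line: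
  assumes "open U" and "holo2 U F" and "a + w *s b \<in> U"
  shows "deriv (deriv (\<lambda>t. F (a + t *s b))) w
    = (\<Sum>r\<in>UNIV. \<Sum>s\<in>UNIV. b $ r * b $ s * pd r (pd s F) (a + w *s b))"
proof -
  have F: "cdiff_on U F" and dF: "cdiff_on U (pd s F)" for s
    using assms(2) by (auto simp: holo2_def)
  have "isCont (\<lambda>t. a + t *s b) w"
    by (rule has_derivative_continuous[OF has_derivative_line])
  then have "((\<lambda>t. a + t *s b) \<longlongrightarrow> a + w *s b) (nhds w)"
    using tendsto_at_iff_tendsto_nhds[of "\<lambda>t. a + t *s b" w] by (simp only: continuous_at)
  then have "eventually (\<lambda>t. a + t *s b \<in> U) (nhds w)"
    using assms(1,3) by (rule topological_tendstoD)
  then have "eventually (\<lambda>t. deriv (\<lambda>t. F (a + t *s b)) t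
      = (\<Sum>s\<in>UNIV. pd s F (a + t *s b) * b $ s)) (nhds w)"
    by eventually_elim
      (rule DERIV_imp_deriv, rule has_field_derivative_along_line, rule has_derivative_pd[OF F])
  then have "deriv (deriv (\<lambda>t. F (a + t *s b))) w
      = deriv (\<lambda>t. \<Sum>s\<in>UNIV. pd s F (a + t *s b) * b $ s) w"
    by (rule deriv_cong_ev) simp
  also have "\<dots> = (\<Sum>s\<in>UNIV. (\<Sum>r\<in>UNIV. pd r (pd s F) (a + w *s b) * b $ r) * b $ s)"
    by (intro DERIV_imp_deriv DERIV_sum DERIV_cmult_right has_field_derivative_along_line
        has_derivative_pd[OF dF assms(3)])
  also have "\<dots> = (\<Sum>r\<in>UNIV. \<Sum>s\<in>UNIV. b $ r * b $ s * pd r (pd s F) (a + w *s b))"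
    by (simp add: sum_distrib_right) (subst sum.swap, simp add: mult_ac)
  finally show ?thesis .
qed

lemma Ttilde_eq_neg_hessian:
  fixes z b x :: "complex^'m::finite"
  assumes "holo2 U F" and "x \<in> U" and "\<forall>r. w \<noteq> z $ r"
    and x_eq: "\<And>r. x $ r = b $ r * (w - z $ r)" and sum_b: "(\<Sum>r\<in>UNIV. b $ r) = 0"
  shows "Ttilde z \<delta> F w x = - (\<Sum>r\<in>UNIV. \<Sum>s\<in>UNIV. b $ r * b $ s * pd r (pd s F) x)"
proof -
  have dF: "cdiff_on U (pd s F)" for s
    using assms(1) by (simp add: holo2_def)
  define d where "d r = w - z $ r" for r
  have d_ne: "d r \<noteq> 0" for r
    using assms(3) by (simp add: d_def)
  define B where "B r = 1 / (d r)^2 * (x $ r * pd r F x)" for r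
  define E where "E s = \<delta> s / x $ s * F x - x $ s * pd s (pd s F) x" for s
  define H where "H = (\<Sum>r\<in>UNIV. \<Sum>s\<in>UNIV. b $ r * b $ s * pd r (pd s F) x)"
  have "1 / (d r * d s) * (x $ r * pd r (\<lambda>x'. x' $ s * pd s F x') x)
      = (if r = s then B r else 0) + b $ r * b $ s * pd r (pd s F) x" for r s
    using d_ne[of r] d_ne[of s]
    by (cases "r = s")
      (simp_all add: pd_coord_mult[OF dF assms(2)] x_eq d_def[symmetric] B_def
        field_simps power2_eq_square)
  then have "(\<Sum>r\<in>UNIV. \<Sum>s\<in>UNIV. 1 / (d r * d s) *
      (x $ r * pd r (\<lambda>x'. x' $ s * pd s F x') x)) = (\<Sum>r\<in>UNIV. B r) + H"
    by (simp add: H_def sum.distrib)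
  moreover have "1 / (d r * d s) * (x $ r * E s) = b $ r * (E s / d s)" for r s
    using d_ne[of r] d_ne[of s] by (simp add: x_eq d_def[symmetric])
  then have "(\<Sum>r\<in>UNIV. \<Sum>s\<in>UNIV. 1 / (d r * d s) * (x $ r * E s)) = 0"
    by (simp only: sum_product[symmetric] sum_b mult_zero_left)
  ultimately show ?thesis
    unfolding Ttilde_def d_def[symmetric] by (simp add: B_def H_def E_def)
qed

definition kmap_direction ::
    "complex^'m::finite \<Rightarrow> complex^'d::finite \<Rightarrow> complex \<Rightarrow> 'd \<Rightarrow> complex^'m" where
  "kmap_direction z y \<rho> k =
     (\<chi> r. - \<rho> * (\<Prod>i\<in>UNIV - {k}. z $ r - y $ i) / (\<Prod>s\<in>UNIV - {r}. z $ r - z $ s))"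

lemma kmap_nth_eq_direction: "kmap z y \<rho> $ r = kmap_direction z y \<rho> k $ r * (y $ k - z $ r)"
proof -
  have "(\<Prod>i\<in>UNIV. z $ r - y $ i) = - (y $ k - z $ r) * (\<Prod>i\<in>UNIV - {k}. z $ r - y $ i)"
    by (simp add: prod.remove[of UNIV k])
  then show ?thesis
    unfolding kmap_def kappa_def kmap_direction_def vec_lambda_beta
    by (simp only:) (simp add: divide_inverse algebra_simps)
qed

lemma kmap_direction_upd:
  "kmap_direction z (\<chi> i. if i = k then t else y $ i) \<rho> k = kmap_direction z y \<rho> k"
  by (simp add: kmap_direction_def)

lemma kmap_upd_eq_line:
  "kmap z (\<chi> i. if i = k then t else y $ i) \<rho>
     = (\<chi> r. - kmap_direction z y \<rho> k $ r * z $ r) + t *s kmap_direction z y \<rho> k"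
  by (simp add: vec_eq_iff kmap_nth_eq_direction[where k = k] kmap_direction_upd algebra_simps)

lemma sum_kmap_direction_eq_0:
  fixes z :: "complex^'m::finite" and y :: "complex^'d::finite"
  assumes "CARD('m) = CARD('d) + 2" and "inj (\<lambda>r. z $ r)"
  shows "(\<Sum>r\<in>UNIV. kmap_direction z y \<rho> k $ r) = 0"
proof -
  define p where "p = (\<Prod>i\<in>UNIV - {k}. [:- y $ i, 1:])"
  have "degree p \<le> card (UNIV - {k})"
    unfolding p_def by (rule order.trans[OF degree_prod_sum_le]) auto
  then have "degree p + 2 \<le> card (UNIV :: 'm set)"
    using assms(1) by (simp add: card_Diff_singleton)
  then have "(\<Sum>r\<in>UNIV. poly p (z $ r) / (\<Prod>s\<in>UNIV - {r}. z $ r - z $ s)) = 0"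
    using assms(2) by (intro sum_poly_div_prod_diff_eq_0) auto
  moreover have "kmap_direction z y \<rho> k $ r
      = - \<rho> * (poly p (z $ r) / (\<Prod>s\<in>UNIV - {r}. z $ r - z $ s))" for r
    by (simp add: kmap_direction_def p_def poly_prod)
  ultimately show ?thesis
    by (simp only: sum_distrib_left[symmetric] mult_zero_right)
qed

theorem mainTheorem5:
  fixes z j :: "complex^'m::finite" and y :: "complex^'d::finite" and \<rho> :: complex
    and F :: "complex^'m \<Rightarrow> complex" and U :: "(complex^'m) set" and k :: 'd
  assumes "CARD('m) = CARD('d) + 2"
    and "inj (\<lambda>r. z $ r)"
    and "open U" and "holo2 U F" and "kmap z y \<rho> \<in> U"
    and "\<rho> \<noteq> 0" and "\<forall>r. y $ k \<noteq> z $ r"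
  shows "Ttilde z (\<lambda>r. j $ r * (j $ r + 1)) F (y $ k) (kmap z y \<rho>)
       = - deriv (deriv (\<lambda>t. F (kmap z (\<chi> i. if i = k then t else y $ i) \<rho>))) (y $ k)"
proof -
  define b where "b = kmap_direction z y \<rho> k"
  define a where "a = (\<chi> r. - b $ r * z $ r)"
  have line: "kmap z (\<chi> i. if i = k then t else y $ i) \<rho> = a + t *s b" for t
    by (simp add: a_def b_def kmap_upd_eq_line)
  have kmap_eq: "kmap z y \<rho> = a + y $ k *s b"
  proof -
    have "(\<chi> i. if i = k then y $ k else y $ i) = y"
      by (simp add: vec_eq_iff)
    then show ?thesis
      using line[of "y $ k"] by simp
  qed
  have "deriv (deriv (\<lambda>t. F (kmap z (\<chi> i. if i = k then t else y $ i) \<rho>))) (y $ k)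
      = (\<Sum>r\<in>UNIV. \<Sum>s\<in>UNIV. b $ r * b $ s * pd r (pd s F) (kmap z y \<rho>))"
    using deriv2_along_line[OF assms(3,4)] assms(5) by (simp add: line kmap_eq)
  moreover have "Ttilde z (\<lambda>r. j $ r * (j $ r + 1)) F (y $ k) (kmap z y \<rho>)
      = - (\<Sum>r\<in>UNIV. \<Sum>s\<in>UNIV. b $ r * b $ s * pd r (pd s F) (kmap z y \<rho>))"
    using assms(1,2) by (intro Ttilde_eq_neg_hessian[OF assms(4,5,7)])
      (simp_all add: b_def kmap_nth_eq_direction[where k = k] sum_kmap_direction_eq_0)
  ultimately show ?thesis
    by simp
qed

end
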